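(* Let $M_n$ be the array indexed by $\{0,1,\dots,n\}^3$ with $(M_n)_{i,j,k}=\min\big(k\min(i,j),\ ij-(n-k)\max(0,i+j-n)\big)$. Then $M_n$ is a corner-sum hypermatrix of order $n$ and $M_n\ge C$ entrywise for every corner-sum hypermatrix $C$ of order $n$; i.e. $M_n$ is the unique minimum element of $(\mathcal C_n,\preceq)$.
   Context: Let $[0,n]=\{0,1,\dots,n\}$. A corner-sum hypermatrix of order $n$ is an integer array $C=(C_{i,j,k})_{i,j,k\in[0,n]}$ such that for all $i,j\in[0,n]$: $C_{i,j,0}=C_{i,0,j}=C_{0,i,j}=0$, $C_{i,j,n}=C_{i,n,j}=C_{n,i,j}=ij$, and for all $k\in\{1,\dots,n\}$ each of $C_{i,j,k}-C_{i,j,k-1}$, $C_{i,k,j}-C_{i,k-1,j}$, $C_{k,i,j}-C_{k-1,i,j}$ is an integer in $\{\max(0,i+j-n),\dots,\min(i,j)\}$. $\mathcal C_n$ is the set of these, ordered by $C\preceq D$ iff $C\ge D$ entrywise. *)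

theory Defs
  imports Main
begin

text \<open>A hypermatrix of order n is represented by a function nat => nat => nat => int;
only its values on the index cube [0,n]^3 are relevant.\<close>

definition band :: "nat \<Rightarrow> nat \<Rightarrow> nat \<Rightarrow> int set" where
  "band n i j = {max 0 (int i + int j - int n) .. int (min i j)}"

definition corner_sum :: "nat \<Rightarrow> (nat \<Rightarrow> nat \<Rightarrow> nat \<Rightarrow> int) \<Rightarrow> bool" where
  "corner_sum n C \<longleftrightarrow>
     (\<forall>i\<le>n. \<forall>j\<le>n.
        C i j 0 = 0 \<and> C i 0 j = 0 \<and> C 0 i j = 0 \<and>
        C i j n = int (i * j) \<and> C i n j = int (i * j) \<and> C n i j = int (i * j) \<and>
        (\<forall>k\<in>{1..n}.
           C i j k - C i j (k - 1) \<in> band n i j \<and>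
           C i k j - C i (k - 1) j \<in> band n i j \<and>
           C k i j - C (k - 1) i j \<in> band n i j))"

definition Mmin :: "nat \<Rightarrow> nat \<Rightarrow> nat \<Rightarrow> nat \<Rightarrow> int" where
  "Mmin n i j k = min (int k * int (min i j))
                      (int i * int j - (int n - int k) * max 0 (int i + int j - int n))"

end

theory Submission
  imports Defs
begin

text \<open>Along a line in the third direction a corner-sum hypermatrix runs from 0 to i j with
increments in [max(0, i+j-n), min(i,j)]. Counting increments from the start gives
C i j k \<le> k min(i,j), counting them from the end gives C i j k \<le> i j - (n-k) max(0, i+j-n);
Mmin is the minimum of these two bounds. Conversely, the minimum of two arithmetic
progressions with steps b \<le> a has all increments in [b, a], and Mmin is symmetric in
i, j, k, being the minimum of i j, j k, k i and i j + j k + k i - n(i+j+k) + n^2;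
so Mmin is itself a corner-sum hypermatrix.\<close>

lemma le_of_increments_le:
  fixes f :: "nat \<Rightarrow> int"
  assumes "\<forall>k\<in>{1..n}. f k - f (k - 1) \<le> a" and "k \<le> n"
  shows "f k \<le> f 0 + int k * a"
  using assms(2)
proof (induction k)
  case (Suc k)
  then have "f (Suc k) - f k \<le> a" using assms(1) by force
  with Suc show ?case by (simp add: algebra_simps)
qed simp

lemma le_of_increments_ge:
  fixes f :: "nat \<Rightarrow> int"
  assumes "\<forall>k\<in>{1..n}. b \<le> f k - f (k - 1)" and "k \<le> n"
  shows "f k \<le> f n - int (n - k) * b"
  using assms(2)
proof (induction k rule: inc_induct)
  case (step k)
  then have "b \<le> f (Suc k) - f k" using assms(1) by force
  with step show ?case by (simp add: Suc_diff_Suc algebra_simps)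
qed simp

lemma min_arith_progressions_increment:
  fixes x y a b :: int
  assumes "b \<le> a"
  shows "min (x + a) (y + b) - min x y \<in> {b..a}"
  using assms by (auto simp: min_def)

lemma Mmin_increment:
  assumes "i \<le> n" "j \<le> n" "k \<in> {1..n}"
  shows "Mmin n i j k - Mmin n i j (k - 1) \<in> band n i j"
proof -
  obtain m where k: "k = Suc m" using assms by (cases k) auto
  define a where "a = int (min i j)"
  define b where "b = max 0 (int i + int j - int n)"
  define x where "x = int m * a"
  define y where "y = int i * int j - (int n - int m) * b"
  have "b \<le> a" using assms unfolding a_def b_def by auto
  have "Mmin n i j k = min (x + a) (y + b)"
    unfolding Mmin_def x_def y_def a_def b_def k by (simp add: algebra_simps)
  moreover have "Mmin n i j (k - 1) = min x y"
    unfolding Mmin_def x_def y_def a_def b_def k by simp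
  ultimately show ?thesis
    using min_arith_progressions_increment[OF \<open>b \<le> a\<close>, of x y]
    unfolding band_def a_def b_def by simp
qed

lemma Mmin_symmetric_form:
  assumes "k \<le> n"
  shows "Mmin n i j k = min (min (int i * int j) (int j * int k))
     (min (int k * int i) (int i * int j + int j * int k + int k * int i
        - int n * (int i + int j + int k) + int n * int n))"
proof -
  have lower: "int k * int (min i j) = min (int k * int i) (int k * int j)"
    by (simp flip: of_nat_mult add: nat_mult_min_right)
  have upper: "(int n - int k) * max 0 (int i + int j - int n)
      = max 0 ((int n - int k) * (int i + int j - int n))"
    using assms by (auto simp: max_def zero_le_mult_iff)
  have "int i * int j - max 0 ((int n - int k) * (int i + int j - int n))
      = min (int i * int j) (int i * int j + int j * int k + int k * int i
        - int n * (int i + int j + int k) + int n * int n)"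
    by (simp add: max_def min_def algebra_simps)
  then show ?thesis
    unfolding Mmin_def lower upper
    by (simp add: min.commute min.left_commute min.assoc mult.commute)
qed

lemma Mmin_swap_12: "Mmin n i j k = Mmin n j i k"
  unfolding Mmin_def by (simp add: min.commute add.commute mult.commute)

lemma Mmin_swap_23:
  assumes "j \<le> n" "k \<le> n"
  shows "Mmin n i j k = Mmin n i k j"
  using assms
  by (simp add: Mmin_symmetric_form algebra_simps min.commute min.left_commute min.assoc)

lemma Mmin_rotate:
  assumes "i \<le> n" "j \<le> n" "k \<le> n"
  shows "Mmin n i k j = Mmin n i j k" and "Mmin n k i j = Mmin n i j k"
  using assms Mmin_swap_12 Mmin_swap_23 by metis+

lemma Mmin_bottom:
  assumes "i \<le> n" "j \<le> n"
  shows "Mmin n i j 0 = 0"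
proof -
  have "0 \<le> int i * int j - int n * max 0 (int i + int j - int n)"
  proof (cases "i + j \<le> n")
    case False
    then have "int i * int j - int n * max 0 (int i + int j - int n)
        = (int n - int i) * (int n - int j)" by (simp add: algebra_simps)
    with assms show ?thesis by simp
  qed simp
  then show ?thesis unfolding Mmin_def by simp
qed

lemma Mmin_top:
  assumes "i \<le> n" "j \<le> n"
  shows "Mmin n i j n = int (i * j)"
proof -
  have "int i * int j \<le> int n * int (min i j)"
    using assms by (simp flip: of_nat_mult add: nat_mult_min_right mult.commute[of n])
  then show ?thesis unfolding Mmin_def by simp
qed

lemma corner_sum_Mmin: "corner_sum n (Mmin n)"
  unfolding corner_sum_def
proof (intro allI impI conjI ballI)
  fix i j assume ij: "i \<le> n" "j \<le> n"
  have "Mmin n i j 0 = 0" and "Mmin n i j n = int (i * j)"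
    using Mmin_bottom Mmin_top ij by simp_all
  then show "Mmin n i j 0 = 0" "Mmin n i 0 j = 0" "Mmin n 0 i j = 0"
    and "Mmin n i j n = int (i * j)" "Mmin n i n j = int (i * j)" "Mmin n n i j = int (i * j)"
    using Mmin_rotate[OF ij le0] Mmin_rotate[OF ij order.refl] by simp_all
  fix k assume k: "k \<in> {1..n}"
  then have "k \<le> n" "k - 1 \<le> n" by auto
  have "Mmin n i j k - Mmin n i j (k - 1) \<in> band n i j"
    using Mmin_increment[OF ij k] .
  then show "Mmin n i j k - Mmin n i j (k - 1) \<in> band n i j"
    and "Mmin n i k j - Mmin n i (k - 1) j \<in> band n i j"
    and "Mmin n k i j - Mmin n (k - 1) i j \<in> band n i j"
    using Mmin_rotate[OF ij \<open>k \<le> n\<close>] Mmin_rotate[OF ij \<open>k - 1 \<le> n\<close>] by simp_all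
qed

lemma corner_sum_le_Mmin:
  assumes "corner_sum n C" and "i \<le> n" "j \<le> n" "k \<le> n"
  shows "C i j k \<le> Mmin n i j k"
proof -
  have "\<forall>k\<in>{1..n}. C i j k - C i j (k - 1) \<in> band n i j"
    and "C i j 0 = 0" and "C i j n = int (i * j)"
    using assms unfolding corner_sum_def by auto
  then have increments_le: "\<forall>k\<in>{1..n}. C i j k - C i j (k - 1) \<le> int (min i j)"
    and increments_ge: "\<forall>k\<in>{1..n}. max 0 (int i + int j - int n) \<le> C i j k - C i j (k - 1)"
    unfolding band_def by auto
  have "C i j k \<le> int k * int (min i j)"
    using le_of_increments_le[OF increments_le \<open>k \<le> n\<close>] \<open>C i j 0 = 0\<close> by simp
  moreover have "C i j k \<le> int (i * j) - int (n - k) * max 0 (int i + int j - int n)"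
    using le_of_increments_ge[OF increments_ge \<open>k \<le> n\<close>] \<open>C i j n = int (i * j)\<close> by simp
  ultimately show ?thesis
    using \<open>k \<le> n\<close> unfolding Mmin_def by simp
qed

theorem mainTheorem9:
  fixes n :: nat
  shows "corner_sum n (Mmin n) \<and>
         (\<forall>C. corner_sum n C \<longrightarrow>
              (\<forall>i\<le>n. \<forall>j\<le>n. \<forall>k\<le>n. Mmin n i j k \<ge> C i j k))"
  using corner_sum_Mmin corner_sum_le_Mmin by blast

end
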